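(* Let $A$ be an integral domain with a non-trivial $\mathbb{Z}$-grading and let $\alpha$ be a nonzero homogeneous element of $A$. Then there exist homogeneous elements $f\in\alpha A\setminus\{0\}$ and $w\in A_f^*$ such that $A_f=(A_f)_0[w,w^{-1}]$, and this ring is isomorphic to the Laurent polynomial ring in one variable over $(A_f)_0$.
   Context: $A_f$ is the localization of $A$ at the powers of $f$, with the $\mathbb{Z}$-grading extended from $A$; $(A_f)_0$ is its subring of degree-zero elements. *)

theory Defs
  imports Main "HOL-Computational_Algebra.Fraction_Field"
begin

definition Z_grading :: "(int \<Rightarrow> 'a::comm_ring_1 set) \<Rightarrow> bool" where
  "Z_grading gr \<longleftrightarrow>
     (\<forall>n. 0 \<in> gr n \<and> (\<forall>x\<in>gr n. \<forall>y\<in>gr n. x + y \<in> gr n \<and> - x \<in> gr n)) \<and>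
     (\<forall>m n. \<forall>x\<in>gr m. \<forall>y\<in>gr n. x * y \<in> gr (m + n)) \<and>
     (\<forall>a. \<exists>!c :: int \<Rightarrow> 'a. finite {n. c n \<noteq> 0} \<and> (\<forall>n. c n \<in> gr n) \<and>
            a = (\<Sum>n\<in>{n. c n \<noteq> 0}. c n))"

definition nontrivial_grading :: "(int \<Rightarrow> 'a::comm_ring_1 set) \<Rightarrow> bool" where
  "nontrivial_grading gr \<longleftrightarrow> (\<exists>n. n \<noteq> 0 \<and> gr n \<noteq> {0})"

definition homogeneous :: "(int \<Rightarrow> 'a set) \<Rightarrow> 'a \<Rightarrow> bool" where
  "homogeneous gr a \<longleftrightarrow> (\<exists>n. a \<in> gr n)"

text \<open>Localization A_f of a domain A at the powers of f (f nonzero), realised inside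
  the fraction field: A_f = { a / f^k }.\<close>
definition loc :: "'a::idom \<Rightarrow> 'a fract set" where
  "loc f = {Fract a (f ^ k) | a k. True}"

text \<open>Degree-d component of A_f for the grading extended from A, where f is homogeneous
  of degree e: the elements a / f^k with a homogeneous of degree d + k e.\<close>
definition loc_piece :: "(int \<Rightarrow> 'a::idom set) \<Rightarrow> 'a \<Rightarrow> int \<Rightarrow> int \<Rightarrow> 'a fract set" where
  "loc_piece gr f e d = {Fract a (f ^ k) | a k. a \<in> gr (d + int k * e)}"

definition loc_homogeneous :: "(int \<Rightarrow> 'a::idom set) \<Rightarrow> 'a \<Rightarrow> int \<Rightarrow> 'a fract \<Rightarrow> bool" where
  "loc_homogeneous gr f e w \<longleftrightarrow> (\<exists>d. w \<in> loc_piece gr f e d)"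

definition laurent_adjoin :: "'a fract set \<Rightarrow> 'a fract \<Rightarrow> 'a::idom fract set" where
  "laurent_adjoin R w =
     {\<Sum>i\<in>I. c i * w powi i | I c. finite I \<and> (\<forall>i\<in>I. c i \<in> R)}"

text \<open>w is Laurent-independent over R: the natural map R[t,t^-1] -> R[w,w^-1], t |-> w,
  is injective (hence an isomorphism onto R[w,w^-1]).\<close>
definition laurent_independent :: "'a fract set \<Rightarrow> 'a::idom fract \<Rightarrow> bool" where
  "laurent_independent R w \<longleftrightarrow>
     (\<forall>c :: int \<Rightarrow> 'a fract. finite {i. c i \<noteq> 0} \<and> (\<forall>i. c i \<in> R) \<and>
        (\<Sum>i\<in>{i. c i \<noteq> 0}. c i * w powi i) = 0 \<longrightarrow> (\<forall>i. c i = 0))"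

end

theory Submission
  imports Defs
begin

(* In a domain, the differences of degrees of nonzero homogeneous elements form a subgroup
   g\<int> of \<int>, with g > 0 when the grading is nontrivial. Pick nonzero homogeneous p, q with
   deg p - deg q = g and put f = \<alpha> p q: then w = \<alpha> p\<^sup>2 / f has degree g in A_f, with
   inverse \<alpha> q\<^sup>2 / f. Every element of A_f is a finite sum of homogeneous elements, whose
   degrees lie in g\<int>, and a homogeneous element of degree i g is w\<^sup>i times an element of
   degree 0. The powers of w are independent over (A_f)_0 since, after clearing denominators,
   a relation among them is a relation among homogeneous elements of A of distinct degrees. *)

lemma Z_grading_zero: "Z_grading gr \<Longrightarrow> 0 \<in> gr n"
  unfolding Z_grading_def by blast

lemma Z_grading_mult: "Z_grading gr \<Longrightarrow> x \<in> gr m \<Longrightarrow> y \<in> gr n \<Longrightarrow> x * y \<in> gr (m + n)"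
  unfolding Z_grading_def by blast

lemma Z_grading_mult_power:
  assumes "Z_grading gr" and "a \<in> gr m" and "f \<in> gr e"
  shows "a * f ^ k \<in> gr (m + int k * e)"
proof (induction k)
  case 0
  then show ?case using assms(2) by simp
next
  case (Suc k)
  have "a * f ^ k * f \<in> gr (m + int k * e + e)" using Suc Z_grading_mult assms(1,3) by blast
  then show ?case by (simp add: algebra_simps)
qed

lemma Z_grading_decomposition:
  "Z_grading gr \<Longrightarrow>
     \<exists>c. finite {n. c n \<noteq> 0} \<and> (\<forall>n. c n \<in> gr n) \<and> a = (\<Sum>n\<in>{n. c n \<noteq> 0}. c n)"
  unfolding Z_grading_def by blast

lemma Z_grading_components_of_zero:
  assumes "Z_grading gr" and "finite {n. c n \<noteq> 0}" and "\<forall>n. c n \<in> gr n"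
    and "(\<Sum>n\<in>{n. c n \<noteq> 0}. c n) = 0"
  shows "c = (\<lambda>_. 0)"
proof -
  define decomposes_zero where "decomposes_zero c \<longleftrightarrow>
    finite {n. c n \<noteq> 0} \<and> (\<forall>n. c n \<in> gr n) \<and> 0 = (\<Sum>n\<in>{n. c n \<noteq> 0}. c n)"
    for c :: "int \<Rightarrow> 'a"
  have "\<exists>!c. decomposes_zero c"
    using assms(1) unfolding Z_grading_def decomposes_zero_def by blast
  moreover have "decomposes_zero c" "decomposes_zero (\<lambda>_. 0)"
    using assms Z_grading_zero[OF assms(1)] by (auto simp: decomposes_zero_def)
  ultimately show ?thesis by blast
qed

lemma Z_grading_sum_eq_zero:
  assumes "Z_grading gr" and "finite S" and "inj_on h S"
    and "\<forall>i\<in>S. b i \<in> gr (h i)" and "sum b S = 0"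
  shows "\<forall>i\<in>S. b i = 0"
proof -
  define c where "c n = (if n \<in> h ` S then b (inv_into S h n) else 0)" for n
  have c_h: "c (h i) = b i" if "i \<in> S" for i
    using that assms(3) by (simp add: c_def)
  have c_gr: "c n \<in> gr n" for n
    using c_h assms(4) Z_grading_zero[OF assms(1)] by (auto simp: c_def)
  have supp: "{n. c n \<noteq> 0} \<subseteq> h ` S"
    by (auto simp: c_def split: if_splits)
  have "(\<Sum>n\<in>{n. c n \<noteq> 0}. c n) = (\<Sum>n\<in>h ` S. c n)"
    by (rule sum.mono_neutral_left) (use supp assms(2) in auto)
  also have "\<dots> = sum b S"
    using c_h by (simp add: sum.reindex assms(3))
  finally have "(\<Sum>n\<in>{n. c n \<noteq> 0}. c n) = 0"
    using assms(5) by simp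
  moreover have "finite {n. c n \<noteq> 0}"
    using supp assms(2) finite_subset by blast
  ultimately have "c = (\<lambda>_. 0)"
    using Z_grading_components_of_zero[OF assms(1)] c_gr by blast
  then show ?thesis using c_h by metis
qed

definition degree_group :: "(int \<Rightarrow> 'a::zero set) \<Rightarrow> int set" where
  "degree_group gr = {m - n | m n x y. x \<in> gr m \<and> y \<in> gr n \<and> x \<noteq> 0 \<and> y \<noteq> 0}"

lemma degree_groupI: "x \<in> gr m \<Longrightarrow> y \<in> gr n \<Longrightarrow> x \<noteq> 0 \<Longrightarrow> y \<noteq> 0 \<Longrightarrow> m - n \<in> degree_group gr"
  unfolding degree_group_def by blast

lemma degree_group_diff:
  fixes gr :: "int \<Rightarrow> 'a::idom set"
  assumes "Z_grading gr" and "d \<in> degree_group gr" and "d' \<in> degree_group gr"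
  shows "d - d' \<in> degree_group gr"
proof -
  obtain x y m n where "x \<in> gr m" "y \<in> gr n" "x \<noteq> 0" "y \<noteq> 0" "d = m - n"
    using assms(2) unfolding degree_group_def by blast
  moreover obtain x' y' m' n' where "x' \<in> gr m'" "y' \<in> gr n'" "x' \<noteq> 0" "y' \<noteq> 0" "d' = m' - n'"
    using assms(3) unfolding degree_group_def by blast
  ultimately have "(m + n') - (n + m') \<in> degree_group gr"
    using Z_grading_mult[OF assms(1)] by (intro degree_groupI[of "x * y'" _ _ "y * x'"]) auto
  moreover have "d - d' = (m + n') - (n + m')"
    using \<open>d = m - n\<close> \<open>d' = m' - n'\<close> by simp
  ultimately show ?thesis by simp
qed

lemma nontrivial_grading_degree_group:
  fixes gr :: "int \<Rightarrow> 'a::idom set"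
  assumes "Z_grading gr" and "nontrivial_grading gr"
  shows "\<exists>d\<in>degree_group gr. d \<noteq> 0"
proof -
  obtain n x where "n \<noteq> 0" "x \<in> gr n" "x \<noteq> 0"
    using assms(2) Z_grading_zero[OF assms(1)] unfolding nontrivial_grading_def by blast
  moreover have "x * x \<in> gr (n + n)"
    using Z_grading_mult[OF assms(1)] \<open>x \<in> gr n\<close> by blast
  ultimately have "(n + n) - n \<in> degree_group gr"
    by (intro degree_groupI[of "x * x" _ _ x]) auto
  then show ?thesis using \<open>n \<noteq> 0\<close> by auto
qed

lemma int_subgroup_generator:
  fixes T :: "int set"
  assumes "d \<in> T" and "d \<noteq> 0" and diff: "\<forall>x\<in>T. \<forall>y\<in>T. x - y \<in> T"
  shows "\<exists>g>0. g \<in> T \<and> (\<forall>x\<in>T. g dvd x)"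
proof -
  have zero: "0 \<in> T" using diff assms(1) by force
  have multiples: "k * x \<in> T" if "x \<in> T" for x k
  proof (induction k rule: int_induct[of _ 0])
    case base
    then show ?case using zero by simp
  next
    case (step1 i)
    have "i * x - (0 - x) \<in> T" using diff step1 zero that by blast
    then show ?case by (simp add: algebra_simps)
  next
    case (step2 i)
    have "i * x - x \<in> T" using diff step2 that by blast
    then show ?case by (simp add: algebra_simps)
  qed
  have "\<bar>d\<bar> \<in> T"
    using multiples[OF assms(1), of "sgn d"] by (simp add: abs_sgn mult.commute)
  then have "\<exists>n::nat. 0 < n \<and> int n \<in> T"
    using assms(2) by (intro exI[of _ "nat \<bar>d\<bar>"]) auto
  define g0 where "g0 = (LEAST n::nat. 0 < n \<and> int n \<in> T)"
  have g0: "0 < g0 \<and> int g0 \<in> T"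
    unfolding g0_def by (rule LeastI_ex) fact
  have least: "g0 \<le> n" if "0 < n \<and> int n \<in> T" for n
    unfolding g0_def using that by (rule Least_le)
  have "int g0 dvd x" if "x \<in> T" for x
  proof (rule ccontr)
    assume "\<not> int g0 dvd x"
    have "x mod int g0 = x - (x div int g0) * int g0"
      by (simp add: minus_div_mult_eq_mod)
    then have "x mod int g0 \<in> T" using diff multiples g0 that by metis
    moreover have "0 < x mod int g0" "x mod int g0 < int g0"
      using \<open>\<not> int g0 dvd x\<close> g0 by (simp_all add: dvd_eq_mod_eq_0 order_le_neq_trans)
    ultimately show False using least[of "nat (x mod int g0)"] by simp
  qed
  then show ?thesis using g0 by (intro exI[of _ "int g0"]) auto
qed

lemma Fract_sum_same_denominator:
  assumes "(d::'a::idom) \<noteq> 0"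
  shows "(\<Sum>i\<in>S. Fract (b i) d) = Fract (sum b S) d"
proof (induction S rule: infinite_finite_induct)
  case (insert i S)
  have "Fract (b i) d + Fract (sum b S) d = Fract (d * (b i + sum b S)) (d * d)"
    using assms by (simp add: algebra_simps)
  also have "\<dots> = Fract (b i + sum b S) d"
    using assms by (simp add: mult_fract_cancel)
  finally show ?case using insert by simp
qed (simp_all add: fract_collapse)

lemma loc_piece_subset_loc: "loc_piece gr f e d \<subseteq> loc f"
  unfolding loc_def loc_piece_def by blast

lemma loc_piece_mult:
  assumes "Z_grading gr" and "x \<in> loc_piece gr f e d" and "y \<in> loc_piece gr f e d'"
  shows "x * y \<in> loc_piece gr f e (d + d')"
proof -
  obtain a k b l where x: "x = Fract a (f ^ k)" and a: "a \<in> gr (d + int k * e)"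
    and y: "y = Fract b (f ^ l)" and b: "b \<in> gr (d' + int l * e)"
    using assms(2,3) unfolding loc_piece_def by blast
  have "a * b \<in> gr (d + d' + int (k + l) * e)"
    using Z_grading_mult[OF assms(1) a b] by (simp add: algebra_simps)
  moreover have "x * y = Fract (a * b) (f ^ (k + l))"
    using x y by (simp add: power_add)
  ultimately show ?thesis
    unfolding loc_piece_def by blast
qed

lemma one_in_loc_piece_zero:
  assumes "f \<in> gr e" and "f \<noteq> 0"
  shows "1 \<in> loc_piece gr f e 0"
proof -
  have "1 = Fract f (f ^ 1) \<and> f \<in> gr (0 + int 1 * e)"
    using assms by (simp add: One_fract_def eq_fract)
  then show ?thesis unfolding loc_piece_def by blast
qed

lemma loc_piece_power:
  assumes "Z_grading gr" and "f \<in> gr e" and "f \<noteq> 0" and "x \<in> loc_piece gr f e d"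
  shows "x ^ n \<in> loc_piece gr f e (int n * d)"
proof (induction n)
  case 0
  then show ?case using one_in_loc_piece_zero[where gr = gr, OF assms(2,3)] by simp
next
  case (Suc n)
  have "x * x ^ n \<in> loc_piece gr f e (d + int n * d)"
    using loc_piece_mult[OF assms(1,4) Suc] .
  then show ?case by (simp add: algebra_simps)
qed

lemma loc_piece_power_int:
  assumes "Z_grading gr" and "f \<in> gr e" and "f \<noteq> 0"
    and "w \<in> loc_piece gr f e d" and "inverse w \<in> loc_piece gr f e (- d)"
  shows "w powi i \<in> loc_piece gr f e (i * d)"
proof (cases "i \<ge> 0")
  case True
  then show ?thesis
    using loc_piece_power[OF assms(1-4), of "nat i"] by (simp add: power_int_def)
next
  case False
  then show ?thesis
    using loc_piece_power[OF assms(1-3,5), of "nat (- i)"] by (simp add: power_int_def)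
qed

lemma loc_piece_common_denominator:
  assumes "Z_grading gr" and "f \<in> gr e" and "f \<noteq> 0"
    and "finite S" and "\<forall>i\<in>S. x i \<in> loc_piece gr f e (dg i)"
  shows "\<exists>K b. \<forall>i\<in>S. x i = Fract (b i) (f ^ K) \<and> b i \<in> gr (dg i + int K * e)"
proof -
  have "\<forall>i\<in>S. \<exists>a k. x i = Fract a (f ^ k) \<and> a \<in> gr (dg i + int k * e)"
    using assms(5) unfolding loc_piece_def by blast
  then obtain a k where ak: "\<forall>i\<in>S. x i = Fract (a i) (f ^ k i) \<and> a i \<in> gr (dg i + int (k i) * e)"
    by metis
  define K where "K = sum k S"
  have "x i = Fract (a i * f ^ (K - k i)) (f ^ K) \<and> a i * f ^ (K - k i) \<in> gr (dg i + int K * e)"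
    if "i \<in> S" for i
  proof
    have le: "k i \<le> K"
      unfolding K_def using assms(4) that by (intro member_le_sum) auto
    then have "f ^ K = f ^ (K - k i) * f ^ k i"
      by (simp flip: power_add)
    then show "x i = Fract (a i * f ^ (K - k i)) (f ^ K)"
      using ak that assms(3) by (simp add: eq_fract)
    have "a i * f ^ (K - k i) \<in> gr (dg i + int (k i) * e + int (K - k i) * e)"
      using Z_grading_mult_power[OF assms(1) _ assms(2)] ak that by blast
    also have "dg i + int (k i) * e + int (K - k i) * e = dg i + int K * e"
      using le by (simp add: algebra_simps of_nat_diff)
    finally show "a i * f ^ (K - k i) \<in> gr (dg i + int K * e)" .
  qed
  then show ?thesis by (intro exI[of _ K] exI[of _ "\<lambda>i. a i * f ^ (K - k i)"]) blast
qed

lemma sum_loc_piece_in_loc: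
  assumes "Z_grading gr" and "f \<in> gr e" and "f \<noteq> 0"
    and "finite S" and "\<forall>i\<in>S. x i \<in> loc_piece gr f e (dg i)"
  shows "sum x S \<in> loc f"
proof -
  obtain K b where "\<forall>i\<in>S. x i = Fract (b i) (f ^ K)"
    using loc_piece_common_denominator[OF assms] by blast
  then have "sum x S = Fract (sum b S) (f ^ K)"
    using Fract_sum_same_denominator[of "f ^ K" b S] assms(3) by simp
  then show ?thesis unfolding loc_def by blast
qed

lemma loc_piece_sum_eq_zero:
  assumes "Z_grading gr" and "f \<in> gr e" and "f \<noteq> 0"
    and "finite S" and "inj_on dg S" and "\<forall>i\<in>S. x i \<in> loc_piece gr f e (dg i)"
    and "sum x S = 0"
  shows "\<forall>i\<in>S. x i = 0"
proof -
  obtain K b where Kb: "\<forall>i\<in>S. x i = Fract (b i) (f ^ K) \<and> b i \<in> gr (dg i + int K * e)"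
    using loc_piece_common_denominator[OF assms(1-4,6)] by blast
  then have "Fract (sum b S) (f ^ K) = 0"
    using Fract_sum_same_denominator[of "f ^ K" b S] assms(3,7) by simp
  then have "sum b S = 0"
    using assms(3) by (simp add: Zero_fract_def eq_fract)
  moreover have "inj_on (\<lambda>i. dg i + int K * e) S"
    using assms(5) by (simp add: inj_on_def)
  ultimately have "\<forall>i\<in>S. b i = 0"
    using Z_grading_sum_eq_zero[OF assms(1,4)] Kb by blast
  then show ?thesis using Kb by (simp add: fract_collapse)
qed

lemma loc_piece_nonzero_degree:
  fixes gr :: "int \<Rightarrow> 'a::idom set"
  assumes "Z_grading gr" and "f \<in> gr e" and "f \<noteq> 0"
    and "x \<in> loc_piece gr f e d" and "x \<noteq> 0"
  shows "d \<in> degree_group gr"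
proof -
  obtain a k where "x = Fract a (f ^ k)" and a: "a \<in> gr (d + int k * e)"
    using assms(4) unfolding loc_piece_def by blast
  then have "a \<noteq> 0" using assms(5) by (auto simp: fract_collapse)
  moreover have "a * f \<in> gr (d + int k * e + e)" "f * f ^ k \<in> gr (e + int k * e)"
    using Z_grading_mult[OF assms(1) a assms(2)] Z_grading_mult_power[OF assms(1,2,2)] .
  ultimately have "(d + int k * e + e) - (e + int k * e) \<in> degree_group gr"
    using assms(3) by (intro degree_groupI[of "a * f" _ _ "f * f ^ k"]) auto
  then show ?thesis by simp
qed

lemma loc_homogeneous_decomposition:
  assumes "Z_grading gr" and "f \<noteq> 0" and "x \<in> loc f"
  shows "\<exists>D y. finite D \<and> (\<forall>d\<in>D. y d \<in> loc_piece gr f e d \<and> y d \<noteq> 0) \<and> x = sum y D"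
proof -
  obtain b k where x: "x = Fract b (f ^ k)"
    using assms(3) unfolding loc_def by blast
  obtain c where c: "finite {n. c n \<noteq> 0}" "\<forall>n. c n \<in> gr n" "b = (\<Sum>n\<in>{n. c n \<noteq> 0}. c n)"
    using Z_grading_decomposition[OF assms(1)] by blast
  define shift where "shift n = n - int k * e" for n
  define D where "D = shift ` {n. c n \<noteq> 0}"
  define y where "y d = Fract (c (d + int k * e)) (f ^ k)" for d
  have inj: "inj_on shift {n. c n \<noteq> 0}"
    by (simp add: shift_def inj_on_def)
  have "x = (\<Sum>n\<in>{n. c n \<noteq> 0}. Fract (c n) (f ^ k))"
    unfolding x c(3) using assms(2) by (simp add: Fract_sum_same_denominator)
  also have "\<dots> = sum y D"
    unfolding D_def using inj by (simp add: sum.reindex y_def shift_def)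
  finally have "x = sum y D" .
  moreover have "y d \<in> loc_piece gr f e d \<and> y d \<noteq> 0" if "d \<in> D" for d
    using that c(2) assms(2) unfolding D_def y_def shift_def loc_piece_def
    by (auto simp: Zero_fract_def eq_fract)
  ultimately show ?thesis
    using c(1) unfolding D_def by blast
qed

lemma loc_subset_laurent_adjoin:
  assumes "Z_grading gr" and "f \<in> gr e" and "f \<noteq> 0"
    and "w \<in> loc_piece gr f e g" and "inverse w \<in> loc_piece gr f e (- g)" and "w \<noteq> 0"
    and "\<forall>d\<in>degree_group gr. g dvd d"
  shows "loc f \<subseteq> laurent_adjoin (loc_piece gr f e 0) w"
proof
  fix x assume "x \<in> loc f"
  then obtain D y where D: "finite D" "\<forall>d\<in>D. y d \<in> loc_piece gr f e d \<and> y d \<noteq> 0"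
    and x: "x = sum y D"
    using loc_homogeneous_decomposition[OF assms(1,3)] by blast
  have "g dvd d" if "d \<in> D" for d
    using loc_piece_nonzero_degree[OF assms(1-3)] D(2) that assms(7) by blast
  then have d_eq: "d div g * g = d" if "d \<in> D" for d
    using that by simp
  define c where "c i = y (i * g) * w powi (- i)" for i
  have "c (d div g) \<in> loc_piece gr f e 0" if "d \<in> D" for d
    using loc_piece_mult[OF assms(1) _ loc_piece_power_int[OF assms(1-5)]] D(2) that d_eq
    unfolding c_def by (metis add.right_inverse mult_minus_left)
  moreover have "x = (\<Sum>d\<in>D. c (d div g) * w powi (d div g))"
    unfolding x c_def using d_eq assms(6) by (simp add: power_int_minus mult.assoc)
  moreover have "inj_on (\<lambda>d. d div g) D"
    by (rule inj_onI) (metis d_eq)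
  ultimately have "x = (\<Sum>i\<in>(\<lambda>d. d div g) ` D. c i * w powi i)"
    and "\<forall>i\<in>(\<lambda>d. d div g) ` D. c i \<in> loc_piece gr f e 0"
    by (simp_all add: sum.reindex)
  then show "x \<in> laurent_adjoin (loc_piece gr f e 0) w"
    unfolding laurent_adjoin_def using D(1) by blast
qed

lemma laurent_adjoin_subset_loc:
  assumes "Z_grading gr" and "f \<in> gr e" and "f \<noteq> 0"
    and "w \<in> loc_piece gr f e g" and "inverse w \<in> loc_piece gr f e (- g)"
  shows "laurent_adjoin (loc_piece gr f e 0) w \<subseteq> loc f"
proof
  fix x assume "x \<in> laurent_adjoin (loc_piece gr f e 0) w"
  then obtain I c where "finite I" "\<forall>i\<in>I. c i \<in> loc_piece gr f e 0"
    and x: "x = (\<Sum>i\<in>I. c i * w powi i)"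
    unfolding laurent_adjoin_def by blast
  then have "\<forall>i\<in>I. c i * w powi i \<in> loc_piece gr f e (0 + i * g)"
    using loc_piece_mult[OF assms(1) _ loc_piece_power_int[OF assms]] by blast
  then show "x \<in> loc f"
    unfolding x by (rule sum_loc_piece_in_loc[OF assms(1-3) \<open>finite I\<close>])
qed

lemma laurent_independent_homogeneous_unit:
  assumes "Z_grading gr" and "f \<in> gr e" and "f \<noteq> 0"
    and "w \<in> loc_piece gr f e g" and "inverse w \<in> loc_piece gr f e (- g)" and "w \<noteq> 0"
    and "g \<noteq> 0"
  shows "laurent_independent (loc_piece gr f e 0) w"
  unfolding laurent_independent_def
proof (intro allI impI)
  fix c :: "int \<Rightarrow> 'a fract" and j
  assume "finite {i. c i \<noteq> 0} \<and> (\<forall>i. c i \<in> loc_piece gr f e 0) \<and>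
    (\<Sum>i\<in>{i. c i \<noteq> 0}. c i * w powi i) = 0"
  then have fin: "finite {i. c i \<noteq> 0}" and c: "\<And>i. c i \<in> loc_piece gr f e 0"
    and sum_zero: "(\<Sum>i\<in>{i. c i \<noteq> 0}. c i * w powi i) = 0"
    by blast+
  have "c i * w powi i \<in> loc_piece gr f e (i * g)" for i
    using loc_piece_mult[OF assms(1) c loc_piece_power_int[OF assms(1-5)]] by simp
  moreover have "inj_on (\<lambda>i. i * g) {i. c i \<noteq> 0}"
    using assms(7) by (simp add: inj_on_def)
  ultimately have "\<forall>i\<in>{i. c i \<noteq> 0}. c i * w powi i = 0"
    using loc_piece_sum_eq_zero[OF assms(1-3) fin _ _ sum_zero] by blast
  then show "c j = 0" using assms(6) by auto
qed

lemma exists_loc_unit_of_degree: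
  fixes gr :: "int \<Rightarrow> 'a::idom set"
  assumes "Z_grading gr" and "\<alpha> \<in> gr a" and "\<alpha> \<noteq> 0" and "g \<in> degree_group gr"
  shows "\<exists>f e w. f \<in> gr e \<and> (\<exists>b. f = \<alpha> * b) \<and> f \<noteq> 0 \<and> w \<noteq> 0 \<and>
           w \<in> loc_piece gr f e g \<and> inverse w \<in> loc_piece gr f e (- g)"
proof -
  obtain p q m n where pq: "p \<in> gr m" "q \<in> gr n" "p \<noteq> 0" "q \<noteq> 0" "g = m - n"
    using assms(4) unfolding degree_group_def by blast
  define f where "f = \<alpha> * (p * q)"
  define w where "w = Fract (\<alpha> * p * p) f"
  have degrees: "g + int 1 * (a + (m + n)) = a + m + m" "- g + int 1 * (a + (m + n)) = a + n + n"
    using pq(5) by simp_all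
  have "f \<in> gr (a + (m + n))"
    unfolding f_def using Z_grading_mult[OF assms(1)] assms(2) pq(1,2) by blast
  moreover have "\<alpha> * p * p \<in> gr (g + int 1 * (a + (m + n)))" "\<alpha> * q * q \<in> gr (- g + int 1 * (a + (m + n)))"
    unfolding degrees using Z_grading_mult[OF assms(1)] assms(2) pq(1,2) by blast+
  moreover have "w = Fract (\<alpha> * p * p) (f ^ 1)" "inverse w = Fract (\<alpha> * q * q) (f ^ 1)"
    using assms(3) pq(3,4) by (simp_all add: w_def f_def eq_fract)
  moreover have "f \<noteq> 0" "w \<noteq> 0"
    using assms(3) pq(3,4) by (simp_all add: w_def f_def Zero_fract_def eq_fract)
  ultimately show ?thesis
    unfolding loc_piece_def f_def by blast
qed

theorem lemma2p10:
  fixes gr :: "int \<Rightarrow> 'a::idom set" and \<alpha> :: 'a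
  assumes "Z_grading gr" and "nontrivial_grading gr"
    and "\<alpha> \<noteq> 0" and "homogeneous gr \<alpha>"
  shows "\<exists>f e w. f \<in> gr e \<and> (\<exists>b. f = \<alpha> * b) \<and> f \<noteq> 0 \<and>
           w \<in> loc f \<and> (\<exists>v\<in>loc f. w * v = 1) \<and> loc_homogeneous gr f e w \<and>
           loc f = laurent_adjoin (loc_piece gr f e 0) w \<and>
           laurent_independent (loc_piece gr f e 0) w"
proof -
  obtain a where \<alpha>: "\<alpha> \<in> gr a"
    using assms(4) unfolding homogeneous_def by blast
  obtain g where g: "g > 0" "g \<in> degree_group gr" "\<forall>d\<in>degree_group gr. g dvd d"
    using nontrivial_grading_degree_group[OF assms(1,2)] degree_group_diff[OF assms(1)]
      int_subgroup_generator by metis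
  then obtain f e w where f: "f \<in> gr e" "\<exists>b. f = \<alpha> * b" "f \<noteq> 0" and w: "w \<noteq> 0"
    and w_deg: "w \<in> loc_piece gr f e g" "inverse w \<in> loc_piece gr f e (- g)"
    using exists_loc_unit_of_degree[OF assms(1) \<alpha> assms(3)] by blast
  have "w \<in> loc f" "inverse w \<in> loc f"
    using w_deg loc_piece_subset_loc by blast+
  moreover have "w * inverse w = 1"
    using w by simp
  moreover have "loc_homogeneous gr f e w"
    using w_deg(1) unfolding loc_homogeneous_def by blast
  moreover have "loc f = laurent_adjoin (loc_piece gr f e 0) w"
    using loc_subset_laurent_adjoin[OF assms(1) f(1,3) w_deg w g(3)]
      laurent_adjoin_subset_loc[OF assms(1) f(1,3) w_deg] by (rule equalityI)
  moreover have "laurent_independent (loc_piece gr f e 0) w"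
    using laurent_independent_homogeneous_unit[OF assms(1) f(1,3) w_deg w] g(1) by simp
  ultimately show ?thesis
    using f by blast
qed

end
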